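(* Let $X$, $A$, $B$, $C$, $Y$, $H$, $V$, $G_+$, $G_-$ be as in the context. Then $G_+$ and $G_-$ are closed and quasi-accretive. In particular, for $G\in\{G_+,G_-\}$ and all $\xi\in D(H)$, $\mathrm{Re}(\xi|G\xi)\geqslant-(\mu_B+|V|)(\xi|\xi)$, where one may take $\mu_B:=0$ if $B$ is symmetric and $\mu_B:=\|B\|$ if $B$ is bounded.
   Context: $(X,\langle\cdot|\cdot\rangle)$ is a nontrivial complex Hilbert space with norm $\|\cdot\|$. $A:D(A)\to X$ is a densely defined self-adjoint linear operator with $\langle\xi|A\xi\rangle\geqslant\varepsilon\langle\xi|\xi\rangle$ for all $\xi\in D(A)$ for some $\varepsilon>0$; $A^{1/2}$ is its positive self-adjoint square root. $B:D(A^{1/2})\to X$ is linear with $\|B\xi\|^2\leqslant a^2\|A^{1/2}\xi\|^2+b^2\|\xi\|^2$ for all $\xi\in D(A^{1/2})$, for some $a\in[0,1)$, $b\in\mathbb{R}$, and $B$ is symmetric or bounded. $C:D(A^{1/2})\to X$ is linear with $\|C\xi\|^2\leqslant c^2\|A^{1/2}\xi\|^2+d^2\|\xi\|^2$ for all $\xi\in D(A^{1/2})$, for some real $c,d$. $Y:=D(A^{1/2})\times X$ with inner product $(\xi|\eta):=\langle A^{1/2}\xi_1|A^{1/2}\eta_1\rangle+\langle\xi_2|\eta_2\rangle$; $|V|$ is the operator norm of $V$ on $Y$. $H:D(A)\times D(A^{1/2})\to Y$, $H\xi:=(-i\xi_2,iA\xi_1)$; $\hat B:D(H)\to Y$, $\hat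 B\xi:=(0,-B\xi_2)$; $V:Y\to Y$, $V\xi:=(0,iC\xi_1)$ (a bounded operator); $G_+:=-i(H+\hat B+V)$, $G_-:=i(H+\hat B+V)$ with domain $D(H)$. An operator $G$ is quasi-accretive if there is $\omega\in\mathbb{R}$ with $\mathrm{Re}(\xi|G\xi)\geqslant-\omega(\xi|\xi)$ for all $\xi\in D(G)$. *)

theory Defs
  imports Complex_Main
begin

text \<open>A complex Hilbert space is modelled by a carrier type 'x (an additive abelian
group), a complex scalar multiplication sm and an inner product ip which is
conjugate-linear in the first and linear in the second argument.\<close>

definition complex_hilbert :: "(complex \<Rightarrow> 'x::ab_group_add \<Rightarrow> 'x) \<Rightarrow> ('x \<Rightarrow> 'x \<Rightarrow> complex) \<Rightarrow> bool" where
  "complex_hilbert sm ip \<longleftrightarrow>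
     (\<forall>a x y. sm a (x + y) = sm a x + sm a y) \<and>
     (\<forall>a b x. sm (a + b) x = sm a x + sm b x) \<and>
     (\<forall>a b x. sm a (sm b x) = sm (a * b) x) \<and>
     (\<forall>x. sm 1 x = x) \<and>
     (\<forall>x y z. ip x (y + z) = ip x y + ip x z) \<and>
     (\<forall>a x y. ip x (sm a y) = a * ip x y) \<and>
     (\<forall>x y. ip y x = cnj (ip x y)) \<and>
     (\<forall>x. 0 \<le> Re (ip x x)) \<and>
     (\<forall>x. ip x x = 0 \<longrightarrow> x = 0) \<and>
     (\<forall>f :: nat \<Rightarrow> 'x.
        (\<forall>e>0. \<exists>N. \<forall>m\<ge>N. \<forall>n\<ge>N. sqrt (Re (ip (f m - f n) (f m - f n))) < e) \<longrightarrow>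
        (\<exists>l. (\<lambda>n. sqrt (Re (ip (f n - l) (f n - l)))) \<longlonglongrightarrow> 0))"

definition hnorm :: "('x::ab_group_add \<Rightarrow> 'x \<Rightarrow> complex) \<Rightarrow> 'x \<Rightarrow> real" where
  "hnorm ip x = sqrt (Re (ip x x))"

definition subspace_h :: "(complex \<Rightarrow> 'x::ab_group_add \<Rightarrow> 'x) \<Rightarrow> 'x set \<Rightarrow> bool" where
  "subspace_h sm D \<longleftrightarrow> 0 \<in> D \<and> (\<forall>x\<in>D. \<forall>y\<in>D. x + y \<in> D) \<and> (\<forall>a. \<forall>x\<in>D. sm a x \<in> D)"

definition linear_on :: "(complex \<Rightarrow> 'x::ab_group_add \<Rightarrow> 'x) \<Rightarrow> 'x set \<Rightarrow> ('x \<Rightarrow> 'x) \<Rightarrow> bool" where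
  "linear_on sm D T \<longleftrightarrow> subspace_h sm D \<and>
     (\<forall>x\<in>D. \<forall>y\<in>D. T (x + y) = T x + T y) \<and> (\<forall>a. \<forall>x\<in>D. T (sm a x) = sm a (T x))"

definition dense_h :: "('x::ab_group_add \<Rightarrow> 'x \<Rightarrow> complex) \<Rightarrow> 'x set \<Rightarrow> bool" where
  "dense_h ip D \<longleftrightarrow> (\<forall>x. \<forall>e>0. \<exists>y\<in>D. hnorm ip (x - y) < e)"

text \<open>Self-adjointness of a densely defined operator T with domain D:
  D(T*) = D and T* = T, where D(T*) = {eta. exists z. forall xi in D. <eta|T xi> = <z|xi>}.\<close>

definition selfadjoint_h :: "('x::ab_group_add \<Rightarrow> 'x \<Rightarrow> complex) \<Rightarrow> 'x set \<Rightarrow> ('x \<Rightarrow> 'x) \<Rightarrow> bool" where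
  "selfadjoint_h ip D T \<longleftrightarrow>
     (\<forall>\<eta>. (\<exists>z. \<forall>\<xi>\<in>D. ip \<eta> (T \<xi>) = ip z \<xi>) \<longleftrightarrow> \<eta> \<in> D) \<and>
     (\<forall>\<eta>\<in>D. \<forall>\<xi>\<in>D. ip \<eta> (T \<xi>) = ip (T \<eta>) \<xi>)"

definition pos_sqrt_of :: "(complex \<Rightarrow> 'x::ab_group_add \<Rightarrow> 'x) \<Rightarrow> ('x \<Rightarrow> 'x \<Rightarrow> complex) \<Rightarrow>
    'x set \<Rightarrow> ('x \<Rightarrow> 'x) \<Rightarrow> 'x set \<Rightarrow> ('x \<Rightarrow> 'x) \<Rightarrow> bool" where
  "pos_sqrt_of sm ip DS S DA A \<longleftrightarrow>
     linear_on sm DS S \<and> dense_h ip DS \<and> selfadjoint_h ip DS S \<and>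
     (\<forall>\<xi>\<in>DS. 0 \<le> Re (ip \<xi> (S \<xi>))) \<and>
     DA = {\<xi> \<in> DS. S \<xi> \<in> DS} \<and> (\<forall>\<xi>\<in>DA. S (S \<xi>) = A \<xi>)"

definition symmetric_on :: "('x::ab_group_add \<Rightarrow> 'x \<Rightarrow> complex) \<Rightarrow> 'x set \<Rightarrow> ('x \<Rightarrow> 'x) \<Rightarrow> bool" where
  "symmetric_on ip D T \<longleftrightarrow> (\<forall>\<xi>\<in>D. \<forall>\<eta>\<in>D. ip (T \<xi>) \<eta> = ip \<xi> (T \<eta>))"

definition bounded_on :: "('x::ab_group_add \<Rightarrow> 'x \<Rightarrow> complex) \<Rightarrow> 'x set \<Rightarrow> ('x \<Rightarrow> 'x) \<Rightarrow> bool" where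
  "bounded_on ip D T \<longleftrightarrow> (\<exists>K. \<forall>\<xi>\<in>D. hnorm ip (T \<xi>) \<le> K * hnorm ip \<xi>)"

definition opnorm_on :: "('x::ab_group_add \<Rightarrow> 'x \<Rightarrow> complex) \<Rightarrow> 'x set \<Rightarrow> ('x \<Rightarrow> 'x) \<Rightarrow> real" where
  "opnorm_on ip D T = Sup {hnorm ip (T \<xi>) | \<xi>. \<xi> \<in> D \<and> hnorm ip \<xi> \<le> 1}"

section \<open>The energy space Y = D(A^(1/2)) x X\<close>

definition Yspace :: "'x set \<Rightarrow> ('x \<times> 'x) set" where
  "Yspace DS = DS \<times> UNIV"

definition yip :: "('x::ab_group_add \<Rightarrow> 'x \<Rightarrow> complex) \<Rightarrow> ('x \<Rightarrow> 'x) \<Rightarrow> 'x \<times> 'x \<Rightarrow> 'x \<times> 'x \<Rightarrow> complex" where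
  "yip ip S \<xi> \<eta> = ip (S (fst \<xi>)) (S (fst \<eta>)) + ip (snd \<xi>) (snd \<eta>)"

definition ynorm :: "('x::ab_group_add \<Rightarrow> 'x \<Rightarrow> complex) \<Rightarrow> ('x \<Rightarrow> 'x) \<Rightarrow> 'x \<times> 'x \<Rightarrow> real" where
  "ynorm ip S \<xi> = sqrt (Re (yip ip S \<xi> \<xi>))"

definition ysm :: "(complex \<Rightarrow> 'x \<Rightarrow> 'x) \<Rightarrow> complex \<Rightarrow> 'x \<times> 'x \<Rightarrow> 'x \<times> 'x" where
  "ysm sm a \<xi> = (sm a (fst \<xi>), sm a (snd \<xi>))"

definition yadd :: "'x::ab_group_add \<times> 'x \<Rightarrow> 'x \<times> 'x \<Rightarrow> 'x \<times> 'x" where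
  "yadd \<xi> \<eta> = (fst \<xi> + fst \<eta>, snd \<xi> + snd \<eta>)"

definition ydiff :: "'x::ab_group_add \<times> 'x \<Rightarrow> 'x \<times> 'x \<Rightarrow> 'x \<times> 'x" where
  "ydiff \<xi> \<eta> = (fst \<xi> - fst \<eta>, snd \<xi> - snd \<eta>)"

definition yopnorm :: "('x::ab_group_add \<Rightarrow> 'x \<Rightarrow> complex) \<Rightarrow> 'x set \<Rightarrow> ('x \<Rightarrow> 'x) \<Rightarrow>
    ('x \<times> 'x \<Rightarrow> 'x \<times> 'x) \<Rightarrow> real" where
  "yopnorm ip DS S T = Sup {ynorm ip S (T \<xi>) | \<xi>. \<xi> \<in> Yspace DS \<and> ynorm ip S \<xi> \<le> 1}"

definition yclosed :: "('x::ab_group_add \<Rightarrow> 'x \<Rightarrow> complex) \<Rightarrow> 'x set \<Rightarrow> ('x \<Rightarrow> 'x) \<Rightarrow>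
    ('x \<times> 'x) set \<Rightarrow> ('x \<times> 'x \<Rightarrow> 'x \<times> 'x) \<Rightarrow> bool" where
  "yclosed ip DS S D G \<longleftrightarrow>
     (\<forall>f :: nat \<Rightarrow> 'x \<times> 'x. \<forall>x y.
        (\<forall>n. f n \<in> D) \<longrightarrow> x \<in> Yspace DS \<longrightarrow> y \<in> Yspace DS \<longrightarrow>
        (\<lambda>n. ynorm ip S (ydiff (f n) x)) \<longlonglongrightarrow> 0 \<longrightarrow>
        (\<lambda>n. ynorm ip S (ydiff (G (f n)) y)) \<longlonglongrightarrow> 0 \<longrightarrow>
        x \<in> D \<and> G x = y)"

definition yquasi_accretive :: "('x::ab_group_add \<Rightarrow> 'x \<Rightarrow> complex) \<Rightarrow> ('x \<Rightarrow> 'x) \<Rightarrow>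
    ('x \<times> 'x) set \<Rightarrow> ('x \<times> 'x \<Rightarrow> 'x \<times> 'x) \<Rightarrow> bool" where
  "yquasi_accretive ip S D G \<longleftrightarrow>
     (\<exists>\<omega>::real. \<forall>\<xi>\<in>D. Re (yip ip S \<xi> (G \<xi>)) \<ge> - \<omega> * Re (yip ip S \<xi> \<xi>))"

definition DH :: "'x set \<Rightarrow> 'x set \<Rightarrow> ('x \<times> 'x) set" where
  "DH DA DS = DA \<times> DS"

definition Hop :: "(complex \<Rightarrow> 'x \<Rightarrow> 'x) \<Rightarrow> ('x \<Rightarrow> 'x) \<Rightarrow> 'x \<times> 'x \<Rightarrow> 'x \<times> 'x" where
  "Hop sm A \<xi> = (sm (- \<i>) (snd \<xi>), sm \<i> (A (fst \<xi>)))"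

definition Bhat :: "('x::ab_group_add \<Rightarrow> 'x) \<Rightarrow> 'x \<times> 'x \<Rightarrow> 'x \<times> 'x" where
  "Bhat B \<xi> = (0, - B (snd \<xi>))"

definition Vop :: "(complex \<Rightarrow> 'x \<Rightarrow> 'x) \<Rightarrow> ('x::ab_group_add \<Rightarrow> 'x) \<Rightarrow> 'x \<times> 'x \<Rightarrow> 'x \<times> 'x" where
  "Vop sm C \<xi> = (0, sm \<i> (C (fst \<xi>)))"

definition Gplus :: "(complex \<Rightarrow> 'x \<Rightarrow> 'x) \<Rightarrow> ('x::ab_group_add \<Rightarrow> 'x) \<Rightarrow> ('x \<Rightarrow> 'x) \<Rightarrow> ('x \<Rightarrow> 'x) \<Rightarrow> 'x \<times> 'x \<Rightarrow> 'x \<times> 'x" where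
  "Gplus sm A B C \<xi> = ysm sm (- \<i>) (yadd (yadd (Hop sm A \<xi>) (Bhat B \<xi>)) (Vop sm C \<xi>))"

definition Gminus :: "(complex \<Rightarrow> 'x \<Rightarrow> 'x) \<Rightarrow> ('x::ab_group_add \<Rightarrow> 'x) \<Rightarrow> ('x \<Rightarrow> 'x) \<Rightarrow> ('x \<Rightarrow> 'x) \<Rightarrow> 'x \<times> 'x \<Rightarrow> 'x \<times> 'x" where
  "Gminus sm A B C \<xi> = ysm sm \<i> (yadd (yadd (Hop sm A \<xi>) (Bhat B \<xi>)) (Vop sm C \<xi>))"

end

theory Submission
  imports Defs
begin

text \<open>
  Energy convergence of (p, q) controls S p and q but not p itself. Since A is coercive and
  self-adjoint, its range is closed with trivial orthogonal complement, so A is onto; writing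
  \<xi> = A \<zeta> gives |\<xi>|^2 = <S \<xi>|S \<zeta>> and \<epsilon> |S \<zeta>|^2 \<le> |\<xi>|^2, hence \<epsilon> |\<xi>|^2 \<le> |S \<xi>|^2 on all of D(S).
  So energy convergence controls p as well, the S-bounded operators B and C are continuous along
  the sequence, and closedness of the self-adjoint S and of A = S S gives closedness of G+;
  G- is G+ followed by negation.

  For \<xi> = (p, q), the contribution of H to (\<xi>|G+ \<xi>) is <q|A p> - <S p|S q> = cnj z - z with
  z = <S p|S q>, which is imaginary. Hence Re (\<xi>|G+ \<xi>) = Re <q|C p> - Im <q|B q> = - Re (\<xi>|G- \<xi>); the first term is
  bounded by |V| (\<xi>|\<xi>), the second vanishes for symmetric B and is bounded by |B| |q|^2 for
  bounded B.
\<close>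

lemma real_linear_le_quadratic_eq_0:
  fixes R M :: real
  assumes le: "\<And>t. 2 * t * R \<le> t\<^sup>2 * M" and M: "M \<ge> 0"
  shows "R = 0"
proof -
  define q where "q = R\<^sup>2 / (M + 1)"
  have q: "q \<ge> 0"
    using M by (simp add: q_def)
  have "2 * q = 2 * (R / (M + 1)) * R"
    by (simp add: q_def power2_eq_square)
  also have "\<dots> \<le> (R / (M + 1))\<^sup>2 * M"
    by (rule le)
  also have "\<dots> = q * (M / (M + 1))"
    by (simp add: q_def power2_eq_square)
  also have "\<dots> \<le> q"
    using q M by (intro mult_left_le) auto
  finally have "q = 0"
    using q by simp
  then show ?thesis
    using M by (simp add: q_def)
qed

lemma le_Sup_mult_norm:
  fixes g N :: "'a \<Rightarrow> real"
  assumes bdd: "bdd_above {g \<eta> | \<eta>. P \<eta> \<and> N \<eta> \<le> 1}"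
    and normalize: "\<And>\<zeta>. P \<zeta> \<Longrightarrow> N \<zeta> > 0 \<Longrightarrow> \<exists>\<eta>. P \<eta> \<and> N \<eta> \<le> 1 \<and> g \<zeta> = N \<zeta> * g \<eta>"
    and null: "\<And>\<zeta>. P \<zeta> \<Longrightarrow> N \<zeta> = 0 \<Longrightarrow> g \<zeta> \<le> 0"
    and \<xi>: "P \<xi>" "N \<xi> \<ge> 0"
  shows "g \<xi> \<le> Sup {g \<eta> | \<eta>. P \<eta> \<and> N \<eta> \<le> 1} * N \<xi>"
proof (cases "N \<xi> = 0")
  case False
  then obtain \<eta> where \<eta>: "P \<eta>" "N \<eta> \<le> 1" and g: "g \<xi> = N \<xi> * g \<eta>"
    using normalize \<xi> by force
  have "g \<eta> \<le> Sup {g \<eta> | \<eta>. P \<eta> \<and> N \<eta> \<le> 1}"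
    using \<eta> by (intro cSup_upper[OF _ bdd]) blast
  then show ?thesis
    using g \<xi>(2) by (simp add: mult.commute mult_left_mono)
qed (use null \<xi> in simp)

lemma le_sum_of_squares_bound:
  fixes x u v c d :: real
  assumes le: "x\<^sup>2 \<le> c\<^sup>2 * u\<^sup>2 + d\<^sup>2 * v\<^sup>2" and "0 \<le> u" "0 \<le> v"
  shows "x \<le> \<bar>c\<bar> * u + \<bar>d\<bar> * v"
proof (rule power2_le_imp_le)
  have "0 \<le> 2 * (\<bar>c\<bar> * u) * (\<bar>d\<bar> * v)"
    using assms(2,3) by simp
  moreover have "(\<bar>c\<bar> * u + \<bar>d\<bar> * v)\<^sup>2 = c\<^sup>2 * u\<^sup>2 + d\<^sup>2 * v\<^sup>2 + 2 * (\<bar>c\<bar> * u) * (\<bar>d\<bar> * v)"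
    by (simp add: power2_sum power_mult_distrib)
  ultimately show "x\<^sup>2 \<le> (\<bar>c\<bar> * u + \<bar>d\<bar> * v)\<^sup>2"
    using le by linarith
qed (use assms in simp)

lemma interpolation_sq_bound:
  fixes x q s \<epsilon> :: real
  assumes upper: "x\<^sup>2 \<le> q * s" and lower: "\<epsilon> * s\<^sup>2 \<le> x\<^sup>2" and \<epsilon>: "\<epsilon> > 0" and "0 \<le> q" "0 \<le> s"
  shows "\<epsilon> * x\<^sup>2 \<le> q\<^sup>2"
proof (cases "x = 0")
  case False
  have "x\<^sup>2 * (\<epsilon> * x\<^sup>2) \<le> \<epsilon> * (q * s)\<^sup>2"
    using power_mono[OF upper, of 2] \<epsilon> by (simp add: power2_eq_square mult_ac)
  also have "\<dots> = q\<^sup>2 * (\<epsilon> * s\<^sup>2)"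
    by (simp add: power_mult_distrib)
  also have "\<dots> \<le> x\<^sup>2 * q\<^sup>2"
    using lower by (simp add: mult_left_mono mult.commute)
  finally show ?thesis
    using False by (simp add: mult_le_cancel_left_pos)
qed (use \<epsilon> in simp)

lemma Inf_approximating_sequence:
  fixes f :: "'a \<Rightarrow> real"
  assumes "M \<noteq> {}" and "\<And>m. m \<in> M \<Longrightarrow> 0 \<le> f m"
  shows "\<exists>u. \<forall>n. u n \<in> M \<and> f (u n) < Inf (f ` M) + 1 / (real n + 1)"
proof -
  have "bdd_below (f ` M)"
    using assms(2) by (auto intro: bdd_belowI[of _ 0])
  then have "\<exists>m\<in>M. f m < Inf (f ` M) + 1 / (real n + 1)" for n
    using cInf_less_iff[of "f ` M" "Inf (f ` M) + 1 / (real n + 1)"] assms(1) by simp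
  then have "\<forall>n. \<exists>m. m \<in> M \<and> f m < Inf (f ` M) + 1 / (real n + 1)"
    by blast
  from choice[OF this] show ?thesis .
qed

locale hilbert =
  fixes sm :: "complex \<Rightarrow> 'x::ab_group_add \<Rightarrow> 'x" and ip :: "'x \<Rightarrow> 'x \<Rightarrow> complex"
  assumes hilb: "complex_hilbert sm ip"
begin

lemma sm_add_right: "sm a (x + y) = sm a x + sm a y"
  using hilb unfolding complex_hilbert_def by (elim conjE) metis

lemma sm_add_left: "sm (a + b) x = sm a x + sm b x"
  using hilb unfolding complex_hilbert_def by (elim conjE) metis

lemma sm_sm: "sm a (sm b x) = sm (a * b) x"
  using hilb unfolding complex_hilbert_def by (elim conjE) metis

lemma sm_one [simp]: "sm 1 x = x"
  using hilb unfolding complex_hilbert_def by (elim conjE) metis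

lemma ip_add_right: "ip x (y + z) = ip x y + ip x z"
  using hilb unfolding complex_hilbert_def by (elim conjE) metis

lemma ip_sm_right: "ip x (sm a y) = a * ip x y"
  using hilb unfolding complex_hilbert_def by (elim conjE) metis

lemma ip_cnj: "ip y x = cnj (ip x y)"
  using hilb unfolding complex_hilbert_def by (elim conjE) metis

lemma ip_self_Re_nonneg: "0 \<le> Re (ip x x)"
  using hilb unfolding complex_hilbert_def by (elim conjE) metis

lemma ip_self_eq_0: "ip x x = 0 \<Longrightarrow> x = 0"
  using hilb unfolding complex_hilbert_def by (elim conjE) metis

lemma sm_zero_left [simp]: "sm 0 x = 0"
  using sm_add_left[of 0 0 x] by simp

lemma sm_zero_right [simp]: "sm a 0 = 0"
  using sm_add_right[of a 0 0] by simp

lemma sm_minus_right: "sm a (- x) = - sm a x"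
  using sm_add_right[of a x "- x"] by (simp add: eq_neg_iff_add_eq_0 add.commute)

lemma sm_diff_right: "sm a (x - y) = sm a x - sm a y"
  using sm_add_right[of a x "- y"] by (simp add: sm_minus_right)

lemma sm_minus_left: "sm (- a) x = - sm a x"
  using sm_add_left[of a "- a" x] by (simp add: eq_neg_iff_add_eq_0 add.commute)

lemma ip_add_left: "ip (x + y) z = ip x z + ip y z"
  by (metis complex_cnj_add ip_add_right ip_cnj)

lemma ip_sm_left: "ip (sm a x) y = cnj a * ip x y"
  by (metis complex_cnj_mult ip_sm_right ip_cnj)

lemma ip_zero_right [simp]: "ip x 0 = 0"
  using ip_sm_right[of x 0 0] by simp

lemma ip_zero_left [simp]: "ip 0 x = 0"
  using ip_sm_left[of 0 0 x] by simp

lemma ip_minus_right: "ip x (- y) = - ip x y"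
  using ip_add_right[of x y "- y"] by (simp add: eq_neg_iff_add_eq_0 add.commute)

lemma ip_minus_left: "ip (- x) y = - ip x y"
  using ip_add_left[of x "- x" y] by (simp add: eq_neg_iff_add_eq_0 add.commute)

lemma ip_diff_right: "ip x (y - z) = ip x y - ip x z"
  using ip_add_right[of x y "- z"] by (simp add: ip_minus_right)

lemma ip_diff_left: "ip (x - y) z = ip x z - ip y z"
  using ip_add_left[of x "- y" z] by (simp add: ip_minus_left)

abbreviation nm :: "'x \<Rightarrow> real" where
  "nm \<equiv> hnorm ip"

lemma nm_nonneg [simp]: "0 \<le> nm x"
  by (simp add: hnorm_def ip_self_Re_nonneg)

lemma nm_squared: "(nm x)\<^sup>2 = Re (ip x x)"
  by (simp add: hnorm_def ip_self_Re_nonneg)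

lemma ip_self: "ip x x = of_real ((nm x)\<^sup>2)"
proof -
  have "Im (ip x x) = - Im (ip x x)"
    by (subst (1) ip_cnj) simp
  then show ?thesis
    by (simp add: complex_eq_iff nm_squared)
qed

lemma nm_eq_0_iff [simp]: "nm x = 0 \<longleftrightarrow> x = 0"
  using ip_self[of x] ip_self_eq_0[of x] by (auto simp: hnorm_def)

lemma nm_zero [simp]: "nm 0 = 0"
  by simp

lemma nm_pos_iff [simp]: "0 < nm x \<longleftrightarrow> x \<noteq> 0"
  using nm_nonneg[of x] nm_eq_0_iff[of x] by linarith

lemma Re_ip_commute: "Re (ip y x) = Re (ip x y)"
  by (simp add: ip_cnj[of y x])

lemma nm_add_squared: "(nm (x + y))\<^sup>2 = (nm x)\<^sup>2 + 2 * Re (ip x y) + (nm y)\<^sup>2"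
  by (simp add: nm_squared ip_add_left ip_add_right Re_ip_commute[of x y])

lemma nm_diff_squared: "(nm (x - y))\<^sup>2 = (nm x)\<^sup>2 - 2 * Re (ip x y) + (nm y)\<^sup>2"
  by (simp add: nm_squared ip_diff_left ip_diff_right Re_ip_commute[of x y])

lemma nm_sm: "nm (sm a x) = cmod a * nm x"
proof -
  have "(nm (sm a x))\<^sup>2 = (cmod a * nm x)\<^sup>2"
    by (simp add: nm_squared ip_sm_left ip_sm_right mult.assoc[symmetric] complex_mult_cnj
        power_mult_distrib cmod_power2 del: of_real_power)
  then show ?thesis
    by (simp add: power2_eq_iff_nonneg)
qed

lemma nm_minus: "nm (- x) = nm x"
  using nm_sm[of "- 1" x] by (simp add: sm_minus_left)

lemma nm_diff_commute: "nm (x - y) = nm (y - x)"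
  using nm_minus[of "x - y"] by simp

lemma cauchy_schwarz: "cmod (ip x y) \<le> nm x * nm y"
proof (cases "y = 0")
  case False
  define p where "p = ip x y"
  define N where "N = (nm y)\<^sup>2"
  have N: "N > 0"
    using False by (simp add: N_def)
  define l where "l = cnj p / of_real N"
  have "0 \<le> Re (ip (x - sm l y) (x - sm l y))"
    by (rule ip_self_Re_nonneg)
  also have "ip (x - sm l y) (x - sm l y) = of_real ((nm x)\<^sup>2 - (cmod p)\<^sup>2 / N)"
    unfolding ip_diff_left ip_diff_right ip_sm_left ip_sm_right ip_cnj[of y x]
    using N by (simp add: ip_self l_def p_def N_def[symmetric] field_simps complex_norm_square[symmetric] mult.commute[of "cnj _"])
  finally have "(cmod p)\<^sup>2 \<le> (nm x * nm y)\<^sup>2"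
    using N by (simp add: N_def field_simps power_mult_distrib)
  then show ?thesis
    unfolding p_def by (rule power2_le_imp_le) simp
qed simp

lemma abs_Re_ip_le: "\<bar>Re (ip x y)\<bar> \<le> nm x * nm y"
  using cauchy_schwarz[of x y] abs_Re_le_cmod order_trans by blast

lemma abs_Im_ip_le: "\<bar>Im (ip x y)\<bar> \<le> nm x * nm y"
  using cauchy_schwarz[of x y] abs_Im_le_cmod order_trans by blast

lemma nm_triangle: "nm (x + y) \<le> nm x + nm y"
proof -
  have "(nm (x + y))\<^sup>2 \<le> (nm x + nm y)\<^sup>2"
    using abs_Re_ip_le[of x y] by (simp add: nm_add_squared power2_sum)
  then show ?thesis
    by (rule power2_le_imp_le) simp
qed

lemma nm_diff_triangle: "nm (x - z) \<le> nm (x - y) + nm (y - z)"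
  using nm_triangle[of "x - y" "y - z"] by simp

lemma nm_reverse_triangle: "\<bar>nm x - nm y\<bar> \<le> nm (x - y)"
  using nm_triangle[of "x - y" y] nm_triangle[of "y - x" x] nm_diff_commute[of x y]
  by (simp add: abs_le_iff)

lemma parallelogram: "(nm (x + y))\<^sup>2 + (nm (x - y))\<^sup>2 = 2 * (nm x)\<^sup>2 + 2 * (nm y)\<^sup>2"
  by (simp add: nm_add_squared nm_diff_squared)

definition hconv :: "(nat \<Rightarrow> 'x) \<Rightarrow> 'x \<Rightarrow> bool" where
  "hconv f l \<longleftrightarrow> (\<lambda>n. nm (f n - l)) \<longlonglongrightarrow> 0"

definition hcauchy :: "(nat \<Rightarrow> 'x) \<Rightarrow> bool" where
  "hcauchy f \<longleftrightarrow> (\<forall>e>0. \<exists>N. \<forall>m\<ge>N. \<forall>n\<ge>N. nm (f m - f n) < e)"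

lemma hcauchy_hconv:
  assumes "hcauchy f"
  shows "\<exists>l. hconv f l"
proof -
  have "\<forall>f :: nat \<Rightarrow> 'x. (\<forall>e>0. \<exists>N. \<forall>m\<ge>N. \<forall>n\<ge>N. nm (f m - f n) < e) \<longrightarrow>
      (\<exists>l. (\<lambda>n. nm (f n - l)) \<longlonglongrightarrow> 0)"
    using hilb unfolding complex_hilbert_def hnorm_def by (elim conjE) assumption
  then show ?thesis
    using assms unfolding hcauchy_def hconv_def by blast
qed

lemma hconvI_bound:
  assumes "\<And>n. nm (f n - l) \<le> g n" and "g \<longlonglongrightarrow> 0"
  shows "hconv f l"
  unfolding hconv_def by (rule tendsto_sandwich[of "\<lambda>_. 0" _ _ g]) (use assms in auto)

lemma hconv_const: "hconv (\<lambda>n. l) l"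
  by (simp add: hconv_def)

lemma hconv_add:
  assumes "hconv f l" and "hconv g k"
  shows "hconv (\<lambda>n. f n + g n) (l + k)"
proof (rule hconvI_bound)
  show "nm (f n + g n - (l + k)) \<le> nm (f n - l) + nm (g n - k)" for n
    using nm_triangle[of "f n - l" "g n - k"] by (simp add: algebra_simps)
  show "(\<lambda>n. nm (f n - l) + nm (g n - k)) \<longlonglongrightarrow> 0"
    using tendsto_add[OF assms[unfolded hconv_def]] by simp
qed

lemma hconv_minus: "hconv f l \<Longrightarrow> hconv (\<lambda>n. - f n) (- l)"
  using nm_minus[of "f _ - l"] by (simp add: hconv_def algebra_simps)

lemma hconv_diff: "hconv f l \<Longrightarrow> hconv g k \<Longrightarrow> hconv (\<lambda>n. f n - g n) (l - k)"
  using hconv_add[of f l "\<lambda>n. - g n" "- k"] hconv_minus[of g k] by simp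

lemma hconv_sm: "hconv f l \<Longrightarrow> hconv (\<lambda>n. sm a (f n)) (sm a l)"
  unfolding hconv_def sm_diff_right[symmetric] nm_sm by (rule tendsto_mult_right_zero)

lemma hconv_ip_left:
  assumes "hconv f l"
  shows "(\<lambda>n. ip (f n) y) \<longlonglongrightarrow> ip l y"
proof -
  have "(\<lambda>n. norm (ip (f n) y - ip l y)) \<longlonglongrightarrow> 0"
  proof (rule tendsto_sandwich[of "\<lambda>_. 0" _ _ "\<lambda>n. nm (f n - l) * nm y"])
    show "\<forall>\<^sub>F n in sequentially. norm (ip (f n) y - ip l y) \<le> nm (f n - l) * nm y"
      by (intro always_eventually allI) (metis cauchy_schwarz ip_diff_left)
    show "(\<lambda>n. nm (f n - l) * nm y) \<longlonglongrightarrow> 0"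
      using assms unfolding hconv_def by (rule tendsto_mult_left_zero)
  qed auto
  then show ?thesis
    using tendsto_norm_zero_iff LIM_zero_iff by blast
qed

lemma hconv_nm:
  assumes "hconv f l"
  shows "(\<lambda>n. nm (f n)) \<longlonglongrightarrow> nm l"
proof -
  have "(\<lambda>n. norm (nm (f n) - nm l)) \<longlonglongrightarrow> 0"
  proof (rule tendsto_sandwich[of "\<lambda>_. 0" _ _ "\<lambda>n. nm (f n - l)"])
    show "\<forall>\<^sub>F n in sequentially. norm (nm (f n) - nm l) \<le> nm (f n - l)"
      using nm_reverse_triangle by (intro always_eventually allI) simp
  qed (use assms in \<open>auto simp: hconv_def\<close>)
  then show ?thesis
    using tendsto_norm_zero_iff LIM_zero_iff by blast
qed

lemma hconv_hcauchy:
  assumes "hconv f l"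
  shows "hcauchy f"
  unfolding hcauchy_def
proof (intro allI impI)
  fix e :: real
  assume "e > 0"
  then obtain N where N: "\<forall>n\<ge>N. nm (f n - l) < e / 2"
    using LIMSEQ_D[OF assms[unfolded hconv_def], of "e / 2"] by auto
  have "nm (f m - f n) < e" if "m \<ge> N" "n \<ge> N" for m n
  proof -
    have "nm (f m - f n) \<le> nm (f m - l) + nm (f n - l)"
      using nm_diff_triangle[of "f m" "f n" l] by (simp add: nm_diff_commute[of l "f n"])
    also have "\<dots> < e"
      using N that by (metis add_strict_mono field_sum_of_halves)
    finally show ?thesis .
  qed
  then show "\<exists>N. \<forall>m\<ge>N. \<forall>n\<ge>N. nm (f m - f n) < e"
    by blast
qed

lemma hcauchy_dominated:
  assumes g: "hcauchy g" and le: "\<And>m n. nm (f m - f n) \<le> K * nm (g m - g n)"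
  shows "hcauchy f"
  unfolding hcauchy_def
proof (intro allI impI)
  fix e :: real
  assume "e > 0"
  define K' where "K' = max K 1"
  have K': "0 < K'" "K \<le> K'"
    by (auto simp: K'_def)
  obtain N where N: "\<forall>m\<ge>N. \<forall>n\<ge>N. nm (g m - g n) < e / K'"
    using g \<open>e > 0\<close> K' unfolding hcauchy_def by (meson divide_pos_pos)
  have "nm (f m - f n) < e" if "m \<ge> N" "n \<ge> N" for m n
  proof -
    have "nm (f m - f n) \<le> K' * nm (g m - g n)"
      using le[of m n] K' by (meson mult_right_mono nm_nonneg order_trans)
    also have "\<dots> < K' * (e / K')"
      using N that K' by (intro mult_strict_left_mono) auto
    finally show ?thesis
      using K' by simp
  qed
  then show "\<exists>N. \<forall>m\<ge>N. \<forall>n\<ge>N. nm (f m - f n) < e"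
    by blast
qed

lemma hcauchyI_squared_bound:
  assumes le: "\<And>m n. (nm (f m - f n))\<^sup>2 \<le> h m + h n" and h: "h \<longlonglongrightarrow> 0"
  shows "hcauchy f"
  unfolding hcauchy_def
proof (intro allI impI)
  fix e :: real
  assume "e > 0"
  then obtain N where N: "\<forall>n\<ge>N. \<bar>h n\<bar> < e\<^sup>2 / 2"
    using LIMSEQ_D[OF h, of "e\<^sup>2 / 2"] by auto
  have "nm (f m - f n) < e" if "m \<ge> N" "n \<ge> N" for m n
  proof -
    have "h m < e\<^sup>2 / 2" "h n < e\<^sup>2 / 2"
      using N that by fastforce+
    then have "(nm (f m - f n))\<^sup>2 < e\<^sup>2"
      using le[of m n] by linarith
    then show ?thesis
      using \<open>e > 0\<close> by (simp add: power_less_imp_less_base)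
  qed
  then show "\<exists>N. \<forall>m\<ge>N. \<forall>n\<ge>N. nm (f m - f n) < e"
    by blast
qed

lemma linear_on_zero: "linear_on sm D T \<Longrightarrow> 0 \<in> D \<and> T 0 = 0"
  unfolding linear_on_def subspace_h_def by (metis sm_zero_left)

lemma linear_on_add:
  "linear_on sm D T \<Longrightarrow> x \<in> D \<Longrightarrow> y \<in> D \<Longrightarrow> x + y \<in> D \<and> T (x + y) = T x + T y"
  unfolding linear_on_def subspace_h_def by blast

lemma linear_on_sm: "linear_on sm D T \<Longrightarrow> x \<in> D \<Longrightarrow> sm a x \<in> D \<and> T (sm a x) = sm a (T x)"
  unfolding linear_on_def subspace_h_def by blast

lemma linear_on_minus: "linear_on sm D T \<Longrightarrow> x \<in> D \<Longrightarrow> - x \<in> D \<and> T (- x) = - T x"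
  using linear_on_sm[of D T x "- 1"] by (simp add: sm_minus_left)

lemma linear_on_diff:
  "linear_on sm D T \<Longrightarrow> x \<in> D \<Longrightarrow> y \<in> D \<Longrightarrow> x - y \<in> D \<and> T (x - y) = T x - T y"
  using linear_on_add[of D T x "- y"] linear_on_minus[of D T y] by simp

lemma dense_orthogonal_eq_0:
  assumes "dense_h ip D" and orth: "\<And>\<xi>. \<xi> \<in> D \<Longrightarrow> ip w \<xi> = 0"
  shows "w = 0"
proof (rule ccontr)
  assume "w \<noteq> 0"
  then have w: "nm w > 0"
    by simp
  then obtain \<xi> where \<xi>: "\<xi> \<in> D" "nm (w - \<xi>) < nm w"
    using assms(1) unfolding dense_h_def by blast
  have "(nm w)\<^sup>2 = Re (ip w (w - \<xi>))"
    using orth[OF \<xi>(1)] by (simp add: ip_diff_right nm_squared)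
  also have "\<dots> \<le> nm w * nm (w - \<xi>)"
    using abs_Re_ip_le by (rule abs_le_D1)
  also have "\<dots> < nm w * nm w"
    using w \<xi>(2) by simp
  finally show False
    by (simp add: power2_eq_square)
qed

lemma selfadjoint_symmetric:
  "selfadjoint_h ip D T \<Longrightarrow> \<eta> \<in> D \<Longrightarrow> \<xi> \<in> D \<Longrightarrow> ip \<eta> (T \<xi>) = ip (T \<eta>) \<xi>"
  unfolding selfadjoint_h_def by blast

lemma selfadjoint_closed:
  assumes dense: "dense_h ip D" and sa: "selfadjoint_h ip D T"
    and f: "\<And>n. f n \<in> D" and "hconv f x" and "hconv (\<lambda>n. T (f n)) y"
  shows "x \<in> D \<and> T x = y"
proof -
  have weak: "ip x (T \<xi>) = ip y \<xi>" if "\<xi> \<in> D" for \<xi>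
  proof (rule LIMSEQ_unique)
    show "(\<lambda>n. ip (f n) (T \<xi>)) \<longlonglongrightarrow> ip x (T \<xi>)"
      using \<open>hconv f x\<close> by (rule hconv_ip_left)
    show "(\<lambda>n. ip (f n) (T \<xi>)) \<longlonglongrightarrow> ip y \<xi>"
      using hconv_ip_left[OF \<open>hconv (\<lambda>n. T (f n)) y\<close>]
      by (simp add: selfadjoint_symmetric[OF sa f that])
  qed
  then have x: "x \<in> D"
    using sa unfolding selfadjoint_h_def by blast
  have "T x - y = 0"
    using dense by (rule dense_orthogonal_eq_0)
      (simp add: ip_diff_left weak selfadjoint_symmetric[OF sa x, symmetric])
  then show ?thesis
    using x by simp
qed

lemma opnorm_on_bdd_above:
  assumes "bounded_on ip D T"
  shows "bdd_above {nm (T \<xi>) | \<xi>. \<xi> \<in> D \<and> nm \<xi> \<le> 1}"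
proof -
  obtain K where K: "\<And>\<xi>. \<xi> \<in> D \<Longrightarrow> nm (T \<xi>) \<le> K * nm \<xi>"
    using assms unfolding bounded_on_def by blast
  have "nm (T \<xi>) \<le> \<bar>K\<bar>" if "\<xi> \<in> D" "nm \<xi> \<le> 1" for \<xi>
    using K[OF that(1)] mult_mono[OF abs_ge_self[of K] that(2)] by simp
  then show ?thesis
    by (intro bdd_aboveI[where M = "\<bar>K\<bar>"]) force
qed

lemma opnorm_on_nonneg:
  assumes "linear_on sm D T" and "bounded_on ip D T"
  shows "0 \<le> opnorm_on ip D T"
proof -
  have "nm (T 0) \<in> {nm (T \<xi>) | \<xi>. \<xi> \<in> D \<and> nm \<xi> \<le> 1}"
    using linear_on_zero[OF assms(1)] by force
  then show ?thesis
    unfolding opnorm_on_def by (rule cSup_upper2) (simp_all add: opnorm_on_bdd_above[OF assms(2)])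
qed

lemma opnorm_on_bound:
  assumes lin: "linear_on sm D T" and bdd: "bounded_on ip D T" and \<xi>: "\<xi> \<in> D"
  shows "nm (T \<xi>) \<le> opnorm_on ip D T * nm \<xi>"
  unfolding opnorm_on_def
proof (rule le_Sup_mult_norm[OF opnorm_on_bdd_above[OF bdd] _ _ \<xi> nm_nonneg])
  fix \<zeta> assume \<zeta>: "\<zeta> \<in> D" "nm \<zeta> > 0"
  define \<eta> where "\<eta> = sm (of_real (1 / nm \<zeta>)) \<zeta>"
  have "\<eta> \<in> D" "T \<eta> = sm (of_real (1 / nm \<zeta>)) (T \<zeta>)"
    using linear_on_sm[OF lin \<zeta>(1)] by (simp_all add: \<eta>_def)
  moreover have "nm \<eta> = 1" "nm (T \<zeta>) = nm \<zeta> * nm (T \<eta>)"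
    using \<zeta>(2) calculation(2) by (auto simp: \<eta>_def nm_sm norm_divide)
  ultimately show "\<exists>\<eta>. \<eta> \<in> D \<and> nm \<eta> \<le> 1 \<and> nm (T \<zeta>) = nm \<zeta> * nm (T \<eta>)"
    by auto
next
  fix \<zeta> assume "\<zeta> \<in> D" "nm \<zeta> = 0"
  then show "nm (T \<zeta>) \<le> 0"
    using linear_on_zero[OF lin] by simp
qed

lemma symmetric_on_Im_ip_eq_0:
  assumes "symmetric_on ip D T" and "\<xi> \<in> D"
  shows "Im (ip \<xi> (T \<xi>)) = 0"
proof -
  have "ip \<xi> (T \<xi>) = ip (T \<xi>) \<xi>"
    using assms unfolding symmetric_on_def by simp
  also have "\<dots> = cnj (ip \<xi> (T \<xi>))"
    by (rule ip_cnj)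
  finally have "Im (ip \<xi> (T \<xi>)) = Im (cnj (ip \<xi> (T \<xi>)))"
    by (rule arg_cong)
  then show ?thesis
    by simp
qed

lemma bounded_on_abs_Im_ip_le:
  assumes "linear_on sm D T" and "bounded_on ip D T" and "\<xi> \<in> D"
  shows "\<bar>Im (ip \<xi> (T \<xi>))\<bar> \<le> opnorm_on ip D T * (nm \<xi>)\<^sup>2"
proof -
  have "\<bar>Im (ip \<xi> (T \<xi>))\<bar> \<le> nm \<xi> * nm (T \<xi>)"
    by (rule abs_Im_ip_le)
  also have "\<dots> \<le> nm \<xi> * (opnorm_on ip D T * nm \<xi>)"
    using opnorm_on_bound[OF assms] by (simp add: mult_left_mono)
  finally show ?thesis
    by (simp add: power2_eq_square mult_ac)
qed

section \<open>Projection onto closed subspaces\<close>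

lemma best_approximation_orthogonal:
  assumes M: "subspace_h sm M" and w: "w \<in> M" and min: "\<And>m. m \<in> M \<Longrightarrow> nm (y - w) \<le> nm (y - m)"
    and m: "m \<in> M"
  shows "ip (y - w) m = 0"
proof -
  have Re_0: "Re (ip (y - w) v) = 0" if v: "v \<in> M" for v
  proof (rule real_linear_le_quadratic_eq_0)
    fix t :: real
    have "w + sm t v \<in> M"
      using M w v unfolding subspace_h_def by blast
    then have "(nm (y - w))\<^sup>2 \<le> (nm ((y - w) - sm t v))\<^sup>2"
      using min by (simp add: diff_diff_eq power_mono)
    then show "2 * t * Re (ip (y - w) v) \<le> t\<^sup>2 * (nm v)\<^sup>2"
      by (simp add: nm_diff_squared ip_sm_right nm_sm power_mult_distrib)
  qed (rule zero_le_power2)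
  have "sm \<i> m \<in> M"
    using M m unfolding subspace_h_def by blast
  then have "Im (ip (y - w) m) = 0"
    using Re_0[of "sm \<i> m"] by (simp add: ip_sm_right)
  then show ?thesis
    using Re_0[OF m] by (simp add: complex_eq_iff)
qed

lemma midpoint_distance_bound:
  assumes M: "subspace_h sm M" and D: "\<And>m. m \<in> M \<Longrightarrow> D \<le> (nm (y - m))\<^sup>2"
    and u: "u \<in> M" and v: "v \<in> M"
  shows "(nm (u - v))\<^sup>2 \<le> 2 * (nm (y - u))\<^sup>2 + 2 * (nm (y - v))\<^sup>2 - 4 * D"
proof -
  have "sm (1 / 2) (u + v) \<in> M"
    using M u v unfolding subspace_h_def by blast
  then have "4 * D \<le> (nm (sm 2 (y - sm (1 / 2) (u + v))))\<^sup>2"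
    using D by (simp add: nm_sm power_mult_distrib)
  also have "sm 2 (y - sm (1 / 2) (u + v)) = (y - u) + (y - v)"
    using sm_add_left[of 1 1] by (simp add: sm_diff_right sm_sm algebra_simps)
  finally show ?thesis
    using parallelogram[of "y - u" "y - v"] nm_diff_commute[of v u] by simp
qed

definition hclosed :: "'x set \<Rightarrow> bool" where
  "hclosed M \<longleftrightarrow> (\<forall>f l. (\<forall>n. f n \<in> M) \<longrightarrow> hconv f l \<longrightarrow> l \<in> M)"

lemma best_approximation_exists:
  assumes M: "subspace_h sm M" and closed: "hclosed M"
  shows "\<exists>w\<in>M. \<forall>m\<in>M. nm (y - w) \<le> nm (y - m)"
proof -
  define D where "D = Inf ((\<lambda>m. (nm (y - m))\<^sup>2) ` M)"
  have D: "D \<le> (nm (y - m))\<^sup>2" if "m \<in> M" for m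
    unfolding D_def using that by (intro cInf_lower) (auto intro: bdd_belowI[of _ 0])
  have "M \<noteq> {}"
    using M unfolding subspace_h_def by auto
  then obtain u where u: "\<And>n. u n \<in> M" "\<And>n. (nm (y - u n))\<^sup>2 < D + 1 / (real n + 1)"
    using Inf_approximating_sequence[of M "\<lambda>m. (nm (y - m))\<^sup>2"] unfolding D_def by auto
  have inv: "(\<lambda>n. 1 / (real n + 1)) \<longlonglongrightarrow> 0"
    using LIMSEQ_inverse_real_of_nat by (simp add: inverse_eq_divide add.commute)
  have "hcauchy u"
  proof (rule hcauchyI_squared_bound)
    show "(nm (u m - u n))\<^sup>2 \<le> 2 * (1 / (real m + 1)) + 2 * (1 / (real n + 1))" for m n
      using midpoint_distance_bound[OF M D u(1) u(1), of m n] u(2)[of m] u(2)[of n] by linarith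
    show "(\<lambda>n. 2 * (1 / (real n + 1))) \<longlonglongrightarrow> 0"
      using tendsto_mult_right_zero[OF inv, of 2] .
  qed
  then obtain w where w: "hconv u w"
    using hcauchy_hconv by blast
  have "hconv (\<lambda>n. y - u n) (y - w)"
    using hconv_diff[OF hconv_const w] .
  then have "(\<lambda>n. (nm (y - u n))\<^sup>2) \<longlonglongrightarrow> (nm (y - w))\<^sup>2"
    by (intro tendsto_power hconv_nm)
  moreover have "(\<lambda>n. D + 1 / (real n + 1)) \<longlonglongrightarrow> D"
    using tendsto_add[OF tendsto_const inv, of D] by simp
  moreover have "\<exists>N. \<forall>n\<ge>N. (nm (y - u n))\<^sup>2 \<le> D + 1 / (real n + 1)"
    using u(2) by (auto intro: less_imp_le)
  ultimately have w_D: "(nm (y - w))\<^sup>2 \<le> D"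
    by (rule LIMSEQ_le)
  have "nm (y - w) \<le> nm (y - m)" if "m \<in> M" for m
  proof (rule power2_le_imp_le)
    show "(nm (y - w))\<^sup>2 \<le> (nm (y - m))\<^sup>2"
      using w_D D[OF that] by linarith
  qed simp
  moreover have "w \<in> M"
    using closed u(1) w unfolding hclosed_def by blast
  ultimately show ?thesis
    by blast
qed

lemma closed_subspace_with_trivial_complement:
  assumes M: "subspace_h sm M" and closed: "hclosed M"
    and complement: "\<And>z. (\<And>m. m \<in> M \<Longrightarrow> ip z m = 0) \<Longrightarrow> z = 0"
  shows "y \<in> M"
proof -
  obtain w where w: "w \<in> M" and min: "\<And>m. m \<in> M \<Longrightarrow> nm (y - w) \<le> nm (y - m)"
    using best_approximation_exists[OF M closed] by blast
  have "y - w = 0"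
    by (rule complement) (rule best_approximation_orthogonal[OF M w min])
  then show ?thesis
    using w by simp
qed

section \<open>Self-adjoint operators bounded below\<close>

lemma bounded_below_range_closed:
  assumes lin: "linear_on sm D T" and dense: "dense_h ip D" and sa: "selfadjoint_h ip D T"
    and \<epsilon>: "\<epsilon> > 0" and below: "\<And>\<xi>. \<xi> \<in> D \<Longrightarrow> \<epsilon> * nm \<xi> \<le> nm (T \<xi>)"
  shows "hclosed (T ` D)"
  unfolding hclosed_def
proof (intro allI impI)
  fix g w
  assume "\<forall>n. g n \<in> T ` D" and g: "hconv g w"
  then have "\<forall>n. \<exists>x. x \<in> D \<and> g n = T x"
    by blast
  from choice[OF this] obtain u where u: "\<And>n. u n \<in> D" and g_eq: "g = (\<lambda>n. T (u n))"
    by fast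
  have "hcauchy u"
  proof (rule hcauchy_dominated)
    show "hcauchy g"
      using g by (rule hconv_hcauchy)
    show "nm (u m - u n) \<le> (1 / \<epsilon>) * nm (g m - g n)" for m n
      using below[of "u m - u n"] linear_on_diff[OF lin u u] \<epsilon> by (simp add: g_eq field_simps)
  qed
  then obtain v where "hconv u v"
    using hcauchy_hconv by blast
  moreover have "hconv (\<lambda>n. T (u n)) w"
    using g by (simp add: g_eq)
  ultimately have "v \<in> D \<and> T v = w"
    by (rule selfadjoint_closed[OF dense sa u])
  then show "w \<in> T ` D"
    by blast
qed

lemma bounded_below_selfadjoint_range_complement:
  assumes dense: "dense_h ip D" and sa: "selfadjoint_h ip D T"
    and \<epsilon>: "\<epsilon> > 0" and below: "\<And>\<xi>. \<xi> \<in> D \<Longrightarrow> \<epsilon> * nm \<xi> \<le> nm (T \<xi>)"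
    and orth: "\<And>m. m \<in> T ` D \<Longrightarrow> ip z m = 0"
  shows "z = 0"
proof -
  have "\<forall>\<xi>\<in>D. ip z (T \<xi>) = ip 0 \<xi>"
    using orth by simp
  then have z: "z \<in> D"
    using sa unfolding selfadjoint_h_def by blast
  have "T z = 0"
    using dense by (rule dense_orthogonal_eq_0)
      (simp add: orth selfadjoint_symmetric[OF sa z, symmetric])
  then have "nm z \<le> 0"
    using below[OF z] \<epsilon> by (simp add: mult_le_0_iff)
  then show ?thesis
    using nm_nonneg[of z] by simp
qed

lemma bounded_below_selfadjoint_surj:
  assumes lin: "linear_on sm D T" and dense: "dense_h ip D" and sa: "selfadjoint_h ip D T"
    and \<epsilon>: "\<epsilon> > 0" and below: "\<And>\<xi>. \<xi> \<in> D \<Longrightarrow> \<epsilon> * nm \<xi> \<le> nm (T \<xi>)"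
  shows "y \<in> T ` D"
proof (rule closed_subspace_with_trivial_complement)
  show "subspace_h sm (T ` D)"
    unfolding subspace_h_def
  proof safe
    show "0 \<in> T ` D"
      using linear_on_zero[OF lin] by force
    show "T x + T y \<in> T ` D" if "x \<in> D" "y \<in> D" for x y
      using linear_on_add[OF lin that] by force
    show "sm a (T x) \<in> T ` D" if "x \<in> D" for a x
      using linear_on_sm[OF lin that, of a] by force
  qed
  show "hclosed (T ` D)"
    using assms by (rule bounded_below_range_closed)
  show "z = 0" if "\<And>m. m \<in> T ` D \<Longrightarrow> ip z m = 0" for z
    using dense sa \<epsilon> below that by (rule bounded_below_selfadjoint_range_complement)
qed

lemma Re_yip_self: "Re (yip ip S \<xi> \<xi>) = (nm (S (fst \<xi>)))\<^sup>2 + (nm (snd \<xi>))\<^sup>2"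
  by (simp add: yip_def nm_squared)

lemma ynorm_squared: "(ynorm ip S \<xi>)\<^sup>2 = Re (yip ip S \<xi> \<xi>)"
  by (simp add: ynorm_def Re_yip_self)

lemma nm_fst_le_ynorm: "nm (S (fst \<xi>)) \<le> ynorm ip S \<xi>"
  by (simp add: ynorm_def Re_yip_self real_le_rsqrt)

lemma nm_snd_le_ynorm: "nm (snd \<xi>) \<le> ynorm ip S \<xi>"
  by (simp add: ynorm_def Re_yip_self real_le_rsqrt)

lemma Gplus_eq: "Gplus sm A B C (p, q) = (- q, A p + sm \<i> (B q) + C p)"
  using sm_sm[of "- \<i>" "- \<i>"] sm_sm[of "- \<i>" \<i>]
  by (simp add: Gplus_def ysm_def yadd_def Hop_def Bhat_def Vop_def
      sm_add_right sm_diff_right sm_minus_right sm_minus_left)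

lemma Gminus_eq: "Gminus sm A B C (p, q) = (q, - (A p + sm \<i> (B q) + C p))"
  using sm_sm[of \<i> "- \<i>"] sm_sm[of \<i> \<i>]
  by (simp add: Gminus_def ysm_def yadd_def Hop_def Bhat_def Vop_def
      sm_add_right sm_diff_right sm_minus_right sm_minus_left)

end

section \<open>Coercive operators and their square roots\<close>

locale coercive_root = hilbert sm ip
  for sm :: "complex \<Rightarrow> 'x::ab_group_add \<Rightarrow> 'x" and ip +
  fixes DA DS :: "'x set" and A S :: "'x \<Rightarrow> 'x" and \<epsilon> :: real
  assumes A_lin: "linear_on sm DA A" and A_dense: "dense_h ip DA" and A_sa: "selfadjoint_h ip DA A"
    and eps_pos: "\<epsilon> > 0" and A_coercive: "\<forall>\<xi>\<in>DA. Re (ip \<xi> (A \<xi>)) \<ge> \<epsilon> * Re (ip \<xi> \<xi>)"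
    and S_sqrt: "pos_sqrt_of sm ip DS S DA A"
begin

lemma S_lin: "linear_on sm DS S"
  using S_sqrt unfolding pos_sqrt_of_def by blast

lemma S_dense: "dense_h ip DS"
  using S_sqrt unfolding pos_sqrt_of_def by blast

lemma S_sa: "selfadjoint_h ip DS S"
  using S_sqrt unfolding pos_sqrt_of_def by blast

lemma DA_eq: "DA = {\<xi> \<in> DS. S \<xi> \<in> DS}"
  using S_sqrt unfolding pos_sqrt_of_def by blast

lemma S_S_eq_A: "\<xi> \<in> DA \<Longrightarrow> S (S \<xi>) = A \<xi>"
  using S_sqrt unfolding pos_sqrt_of_def by blast

lemma S_symmetric: "\<xi> \<in> DS \<Longrightarrow> \<eta> \<in> DS \<Longrightarrow> ip (S \<xi>) \<eta> = ip \<xi> (S \<eta>)"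
  using selfadjoint_symmetric[OF S_sa] by metis

lemma ip_A_eq: "\<xi> \<in> DA \<Longrightarrow> ip \<xi> (A \<xi>) = ip (S \<xi>) (S \<xi>)"
  using S_symmetric[of \<xi> "S \<xi>"] DA_eq S_S_eq_A[of \<xi>] by simp

lemma A_bounded_below: "\<xi> \<in> DA \<Longrightarrow> \<epsilon> * nm \<xi> \<le> nm (A \<xi>)"
proof (cases "\<xi> = 0")
  case False
  assume "\<xi> \<in> DA"
  then have "nm \<xi> * (\<epsilon> * nm \<xi>) \<le> Re (ip \<xi> (A \<xi>))"
    using A_coercive by (simp add: nm_squared[symmetric] power2_eq_square mult_ac)
  also have "\<dots> \<le> nm \<xi> * nm (A \<xi>)"
    using abs_Re_ip_le by (rule abs_le_D1)
  finally show ?thesis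
    using False by (subst (asm) mult_le_cancel_left_pos) auto
qed (use linear_on_zero[OF A_lin] in simp)

lemma A_surj: "y \<in> A ` DA"
  using A_lin A_dense A_sa eps_pos A_bounded_below by (rule bounded_below_selfadjoint_surj)

lemma S_coercive:
  assumes \<xi>: "\<xi> \<in> DS"
  shows "\<epsilon> * (nm \<xi>)\<^sup>2 \<le> (nm (S \<xi>))\<^sup>2"
proof -
  obtain \<zeta> where \<zeta>: "\<zeta> \<in> DA" and \<xi>_eq: "\<xi> = A \<zeta>"
    using A_surj by blast
  have \<zeta>_DS: "\<zeta> \<in> DS" "S \<zeta> \<in> DS"
    using \<zeta> DA_eq by auto
  have upper: "(nm \<xi>)\<^sup>2 \<le> nm (S \<xi>) * nm (S \<zeta>)"
  proof -
    have "ip \<xi> \<xi> = ip (S \<xi>) (S \<zeta>)"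
      using S_symmetric[OF \<xi> \<zeta>_DS(2)] S_S_eq_A[OF \<zeta>] by (simp add: \<xi>_eq)
    then show ?thesis
      using abs_Re_ip_le[of "S \<xi>" "S \<zeta>"] by (simp add: nm_squared)
  qed
  have lower: "\<epsilon> * (nm (S \<zeta>))\<^sup>2 \<le> (nm \<xi>)\<^sup>2"
  proof -
    have "(nm (S \<zeta>))\<^sup>2 \<le> nm \<zeta> * nm \<xi>"
      using ip_A_eq[OF \<zeta>] abs_Re_ip_le[of \<zeta> \<xi>] by (simp add: nm_squared \<xi>_eq)
    then have "\<epsilon> * (nm (S \<zeta>))\<^sup>2 \<le> (\<epsilon> * nm \<zeta>) * nm \<xi>"
      using eps_pos by (simp add: mult.assoc)
    also have "\<dots> \<le> nm \<xi> * nm \<xi>"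
      using A_bounded_below[OF \<zeta>] by (simp add: \<xi>_eq mult_right_mono)
    finally show ?thesis
      by (simp add: power2_eq_square)
  qed
  show ?thesis
    using upper lower eps_pos by (rule interpolation_sq_bound) simp_all
qed

lemma S_eq_0: "\<xi> \<in> DS \<Longrightarrow> S \<xi> = 0 \<Longrightarrow> \<xi> = 0"
  using S_coercive[of \<xi>] eps_pos by (simp add: mult_le_0_iff)

lemma S_inverse_bound: "\<xi> \<in> DS \<Longrightarrow> nm \<xi> \<le> nm (S \<xi>) / sqrt \<epsilon>"
  using real_sqrt_le_mono[OF S_coercive[of \<xi>]] eps_pos by (simp add: real_sqrt_mult field_simps)

lemma relatively_bounded_by_S:
  assumes rel: "\<forall>\<xi>\<in>DS. (nm (T \<xi>))\<^sup>2 \<le> c\<^sup>2 * (nm (S \<xi>))\<^sup>2 + d\<^sup>2 * (nm \<xi>)\<^sup>2" and \<xi>: "\<xi> \<in> DS"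
  shows "nm (T \<xi>) \<le> (\<bar>c\<bar> + \<bar>d\<bar> / sqrt \<epsilon>) * nm (S \<xi>)"
proof -
  have "nm (T \<xi>) \<le> \<bar>c\<bar> * nm (S \<xi>) + \<bar>d\<bar> * nm \<xi>"
    using rel \<xi> by (intro le_sum_of_squares_bound) auto
  also have "\<dots> \<le> \<bar>c\<bar> * nm (S \<xi>) + \<bar>d\<bar> * (nm (S \<xi>) / sqrt \<epsilon>)"
    using S_inverse_bound[OF \<xi>] by (intro add_left_mono mult_left_mono) auto
  finally show ?thesis
    by (simp add: algebra_simps)
qed

lemma relatively_bounded_hconv:
  assumes lin: "linear_on sm DS T"
    and rel: "\<forall>\<xi>\<in>DS. (nm (T \<xi>))\<^sup>2 \<le> c\<^sup>2 * (nm (S \<xi>))\<^sup>2 + d\<^sup>2 * (nm \<xi>)\<^sup>2"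
    and p: "\<And>n. p n \<in> DS" and x: "x \<in> DS" and conv: "hconv (\<lambda>n. S (p n)) (S x)"
  shows "hconv (\<lambda>n. T (p n)) (T x)"
proof (rule hconvI_bound)
  show "nm (T (p n) - T x) \<le> (\<bar>c\<bar> + \<bar>d\<bar> / sqrt \<epsilon>) * nm (S (p n) - S x)" for n
    using relatively_bounded_by_S[OF rel] linear_on_diff[OF S_lin p x] linear_on_diff[OF lin p x]
    by metis
  show "(\<lambda>n. (\<bar>c\<bar> + \<bar>d\<bar> / sqrt \<epsilon>) * nm (S (p n) - S x)) \<longlonglongrightarrow> 0"
    using conv unfolding hconv_def by (rule tendsto_mult_right_zero)
qed

lemma S_closed: "(\<And>n. p n \<in> DS) \<Longrightarrow> hconv p x \<Longrightarrow> hconv (\<lambda>n. S (p n)) y \<Longrightarrow> x \<in> DS \<and> S x = y"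
  using selfadjoint_closed[OF S_dense S_sa] by blast

lemma S_closed_limit_eq:
  assumes p: "\<And>n. p n \<in> DS" and "hconv p x" and "hconv (\<lambda>n. S (p n)) (S y)" and y: "y \<in> DS"
  shows "x = y"
proof -
  have x: "x \<in> DS" "S x = S y"
    using S_closed[OF assms(1-3)] by auto
  then have "S (x - y) = 0"
    using linear_on_diff[OF S_lin x(1) y] by simp
  then have "x - y = 0"
    using S_eq_0 linear_on_diff[OF S_lin x(1) y] by blast
  then show ?thesis
    by simp
qed

lemma A_closed_in_graph_norm_of_S:
  assumes p: "\<And>n. p n \<in> DA" and x: "x \<in> DS"
    and conv_S: "hconv (\<lambda>n. S (p n)) (S x)" and conv_A: "hconv (\<lambda>n. A (p n)) w"
  shows "x \<in> DA \<and> A x = w"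
proof -
  have "hconv (\<lambda>n. S (S (p n))) w"
    using conv_A by (simp add: S_S_eq_A[OF p])
  then have "S x \<in> DS \<and> S (S x) = w"
    using S_closed[of "\<lambda>n. S (p n)"] p conv_S DA_eq by blast
  then show ?thesis
    using x DA_eq S_S_eq_A by auto
qed

lemma hconv_of_ynorm_ydiff:
  assumes f: "\<And>n. fst (f n) \<in> DS" and x: "fst x \<in> DS"
    and conv: "(\<lambda>n. ynorm ip S (ydiff (f n) x)) \<longlonglongrightarrow> 0"
  shows "hconv (\<lambda>n. S (fst (f n))) (S (fst x))" and "hconv (\<lambda>n. snd (f n)) (snd x)"
proof -
  show "hconv (\<lambda>n. S (fst (f n))) (S (fst x))"
  proof (rule hconvI_bound[OF _ conv])
    show "nm (S (fst (f n)) - S (fst x)) \<le> ynorm ip S (ydiff (f n) x)" for n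
      using nm_fst_le_ynorm[of S "ydiff (f n) x"] linear_on_diff[OF S_lin f x]
      by (simp add: ydiff_def)
  qed
  show "hconv (\<lambda>n. snd (f n)) (snd x)"
    using nm_snd_le_ynorm[of "ydiff (f _) x" S] by (intro hconvI_bound[OF _ conv]) (simp add: ydiff_def)
qed

lemma ynorm_uminus:
  assumes "fst \<xi> \<in> DS"
  shows "ynorm ip S (- fst \<xi>, - snd \<xi>) = ynorm ip S \<xi>"
  using linear_on_minus[OF S_lin assms] by (simp add: ynorm_def Re_yip_self nm_minus)

lemma yclosed_uminus:
  assumes closed: "yclosed ip DS S D G" and range: "\<And>\<xi>. \<xi> \<in> D \<Longrightarrow> fst (G \<xi>) \<in> DS"
  shows "yclosed ip DS S D (\<lambda>\<xi>. (- fst (G \<xi>), - snd (G \<xi>)))"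
  unfolding yclosed_def
proof (intro allI impI)
  fix f :: "nat \<Rightarrow> 'x \<times> 'x" and x y
  assume f: "\<forall>n. f n \<in> D" and x: "x \<in> Yspace DS" and y: "y \<in> Yspace DS"
    and conv_x: "(\<lambda>n. ynorm ip S (ydiff (f n) x)) \<longlonglongrightarrow> 0"
    and conv_y: "(\<lambda>n. ynorm ip S (ydiff (- fst (G (f n)), - snd (G (f n))) y)) \<longlonglongrightarrow> 0"
  define y' where "y' = (- fst y, - snd y)"
  have y': "y' \<in> Yspace DS"
    using linear_on_minus[OF S_lin] y by (auto simp: y'_def Yspace_def)
  have "ydiff (- fst (G (f n)), - snd (G (f n))) y = (- fst (ydiff (G (f n)) y'), - snd (ydiff (G (f n)) y'))" for n
    by (simp add: ydiff_def y'_def algebra_simps)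
  moreover have "fst (ydiff (G (f n)) y') \<in> DS" for n
  proof -
    have "fst (G (f n)) \<in> DS" "fst y' \<in> DS"
      using range f y' by (auto simp: Yspace_def)
    then show ?thesis
      using linear_on_diff[OF S_lin] by (simp add: ydiff_def)
  qed
  ultimately have "(\<lambda>n. ynorm ip S (ydiff (G (f n)) y')) \<longlonglongrightarrow> 0"
    using conv_y by (simp add: ynorm_uminus)
  then have "x \<in> D \<and> G x = y'"
    using closed f x y' conv_x unfolding yclosed_def by blast
  then show "x \<in> D \<and> (- fst (G x), - snd (G x)) = y"
    by (simp add: y'_def)
qed

lemma ynorm_ysm: "fst \<xi> \<in> DS \<Longrightarrow> ynorm ip S (ysm sm a \<xi>) = cmod a * ynorm ip S \<xi>"
  using linear_on_sm[OF S_lin, of "fst \<xi>" a]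
  by (simp add: ynorm_def Re_yip_self ysm_def nm_sm power_mult_distrib real_sqrt_mult
      flip: distrib_left)

lemma ynorm_Vop: "ynorm ip S (Vop sm T \<xi>) = nm (T (fst \<xi>))"
  using linear_on_zero[OF S_lin] by (simp add: ynorm_def Re_yip_self Vop_def nm_sm)

text \<open>Without this bound the supremum defining |V| would be a junk value.\<close>

lemma Vop_bdd_above:
  assumes rel: "\<forall>\<xi>\<in>DS. (nm (T \<xi>))\<^sup>2 \<le> c\<^sup>2 * (nm (S \<xi>))\<^sup>2 + d\<^sup>2 * (nm \<xi>)\<^sup>2"
  shows "bdd_above {ynorm ip S (Vop sm T \<eta>) | \<eta>. \<eta> \<in> Yspace DS \<and> ynorm ip S \<eta> \<le> 1}"
proof -
  let ?K = "\<bar>c\<bar> + \<bar>d\<bar> / sqrt \<epsilon>"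
  have "ynorm ip S (Vop sm T \<eta>) \<le> ?K" if "\<eta> \<in> Yspace DS" "ynorm ip S \<eta> \<le> 1" for \<eta>
  proof -
    have "ynorm ip S (Vop sm T \<eta>) \<le> ?K * nm (S (fst \<eta>))"
      using relatively_bounded_by_S[OF rel] that(1) by (simp add: ynorm_Vop Yspace_def mem_Times_iff)
    also have "\<dots> \<le> ?K * 1"
      using nm_fst_le_ynorm[of S \<eta>] that(2) eps_pos by (intro mult_left_mono) auto
    finally show ?thesis
      by simp
  qed
  then show ?thesis
    by (auto intro!: bdd_aboveI[where M = ?K])
qed

lemma Vop_bound:
  assumes rel: "\<forall>\<xi>\<in>DS. (nm (T \<xi>))\<^sup>2 \<le> c\<^sup>2 * (nm (S \<xi>))\<^sup>2 + d\<^sup>2 * (nm \<xi>)\<^sup>2"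
    and lin: "linear_on sm DS T" and \<xi>: "\<xi> \<in> Yspace DS"
  shows "nm (T (fst \<xi>)) \<le> yopnorm ip DS S (Vop sm T) * ynorm ip S \<xi>"
  unfolding yopnorm_def ynorm_Vop[symmetric]
proof (rule le_Sup_mult_norm[where P = "\<lambda>\<eta>. \<eta> \<in> Yspace DS" and N = "ynorm ip S"
      and g = "\<lambda>\<eta>. ynorm ip S (Vop sm T \<eta>)", OF Vop_bdd_above[OF rel] _ _ \<xi>])
  fix \<zeta> assume \<zeta>: "\<zeta> \<in> Yspace DS" "ynorm ip S \<zeta> > 0"
  define \<eta> where "\<eta> = ysm sm (of_real (1 / ynorm ip S \<zeta>)) \<zeta>"
  have fst_\<zeta>: "fst \<zeta> \<in> DS"
    using \<zeta>(1) by (auto simp: Yspace_def)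
  have "\<eta> \<in> Yspace DS"
    using linear_on_sm[OF S_lin fst_\<zeta>] by (auto simp: \<eta>_def Yspace_def ysm_def)
  moreover have "ynorm ip S \<eta> = 1"
    using \<zeta>(2) by (simp add: \<eta>_def ynorm_ysm[OF fst_\<zeta>] norm_divide)
  moreover have "ynorm ip S (Vop sm T \<zeta>) = ynorm ip S \<zeta> * ynorm ip S (Vop sm T \<eta>)"
    using linear_on_sm[OF lin fst_\<zeta>] \<zeta>(2) by (simp add: ynorm_Vop \<eta>_def ysm_def nm_sm norm_divide)
  ultimately show "\<exists>\<eta>. \<eta> \<in> Yspace DS \<and> ynorm ip S \<eta> \<le> 1 \<and>
      ynorm ip S (Vop sm T \<zeta>) = ynorm ip S \<zeta> * ynorm ip S (Vop sm T \<eta>)"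
    by (intro exI[of _ \<eta>]) simp
next
  fix \<zeta> assume \<zeta>: "\<zeta> \<in> Yspace DS" "ynorm ip S \<zeta> = 0"
  then have "S (fst \<zeta>) = 0"
    using nm_fst_le_ynorm[of S \<zeta>] nm_nonneg[of "S (fst \<zeta>)"] by simp
  then have "fst \<zeta> = 0"
    using \<zeta>(1) S_eq_0 by (simp add: Yspace_def mem_Times_iff)
  then show "ynorm ip S (Vop sm T \<zeta>) \<le> 0"
    using linear_on_zero[OF lin] by (simp add: ynorm_Vop)
qed (simp add: ynorm_def Re_yip_self)

end

section \<open>The generators G+ and G-\<close>

locale wave_generator = coercive_root sm ip DA DS A S \<epsilon>
  for sm :: "complex \<Rightarrow> 'x::ab_group_add \<Rightarrow> 'x" and ip DA DS A S \<epsilon> +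
  fixes B C :: "'x \<Rightarrow> 'x" and a b c d :: real
  assumes B_lin: "linear_on sm DS B"
    and B_rel: "\<forall>\<xi>\<in>DS. (hnorm ip (B \<xi>))\<^sup>2 \<le> a\<^sup>2 * (hnorm ip (S \<xi>))\<^sup>2 + b\<^sup>2 * (hnorm ip \<xi>)\<^sup>2"
    and C_lin: "linear_on sm DS C"
    and C_rel: "\<forall>\<xi>\<in>DS. (hnorm ip (C \<xi>))\<^sup>2 \<le> c\<^sup>2 * (hnorm ip (S \<xi>))\<^sup>2 + d\<^sup>2 * (hnorm ip \<xi>)\<^sup>2"
begin

lemma Gplus_closed: "yclosed ip DS S (DH DA DS) (Gplus sm A B C)"
  unfolding yclosed_def
proof (intro allI impI)
  fix f :: "nat \<Rightarrow> 'x \<times> 'x" and x y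
  assume f: "\<forall>n. f n \<in> DH DA DS" and x: "x \<in> Yspace DS" and y: "y \<in> Yspace DS"
    and conv_x: "(\<lambda>n. ynorm ip S (ydiff (f n) x)) \<longlonglongrightarrow> 0"
    and conv_y: "(\<lambda>n. ynorm ip S (ydiff (Gplus sm A B C (f n)) y)) \<longlonglongrightarrow> 0"
  define p q where "p n = fst (f n)" and "q n = snd (f n)" for n
  have f_eq: "f n = (p n, q n)" for n
    by (simp add: p_def q_def)
  have p: "p n \<in> DA" and q: "q n \<in> DS" for n
    using f by (auto simp: DH_def p_def q_def mem_Times_iff)
  obtain x1 x2 y1 y2 where x_eq: "x = (x1, x2)" and y_eq: "y = (y1, y2)"
    and x1: "x1 \<in> DS" and y1: "y1 \<in> DS"
    using x y unfolding Yspace_def by auto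
  have p_DS: "p n \<in> DS" for n
    using p DA_eq by blast
  have Sp: "hconv (\<lambda>n. S (p n)) (S x1)" and q_x2: "hconv q x2"
    using hconv_of_ynorm_ydiff[OF _ _ conv_x] p_DS x1 by (simp_all add: f_eq x_eq)
  have S_minus_q: "hconv (\<lambda>n. S (- q n)) (S y1)"
    and Gplus_snd: "hconv (\<lambda>n. A (p n) + sm \<i> (B (q n)) + C (p n)) y2"
    using hconv_of_ynorm_ydiff[OF _ _ conv_y] linear_on_minus[OF S_lin q] y1
    by (simp_all add: f_eq y_eq Gplus_eq)
  have "- x2 = y1"
    using S_closed_limit_eq[of "\<lambda>n. - q n"] linear_on_minus[OF S_lin q] hconv_minus[OF q_x2]
      S_minus_q y1 by blast
  then have x2: "x2 \<in> DS" and y1_eq: "y1 = - x2"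
    using linear_on_minus[OF S_lin y1] by auto
  have "hconv (\<lambda>n. S (q n)) (S x2)"
    using hconv_minus[OF S_minus_q] linear_on_minus[OF S_lin] q x2 by (simp add: y1_eq)
  then have "hconv (\<lambda>n. B (q n)) (B x2)"
    using relatively_bounded_hconv[OF B_lin B_rel q x2] by simp
  moreover have "hconv (\<lambda>n. C (p n)) (C x1)"
    using relatively_bounded_hconv[OF C_lin C_rel p_DS x1 Sp] .
  ultimately have "hconv (\<lambda>n. (A (p n) + sm \<i> (B (q n)) + C (p n)) - sm \<i> (B (q n)) - C (p n))
      (y2 - sm \<i> (B x2) - C x1)"
    by (intro hconv_diff hconv_sm Gplus_snd)
  then have "hconv (\<lambda>n. A (p n)) (y2 - sm \<i> (B x2) - C x1)"
    by simp
  then have "x1 \<in> DA \<and> A x1 = y2 - sm \<i> (B x2) - C x1"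
    using A_closed_in_graph_norm_of_S[OF p x1 Sp] by blast
  then show "x \<in> DH DA DS \<and> Gplus sm A B C x = y"
    using x2 by (simp add: DH_def x_eq y_eq y1_eq Gplus_eq)
qed

lemma Gminus_eq_uminus_Gplus:
  "Gminus sm A B C = (\<lambda>\<xi>. (- fst (Gplus sm A B C \<xi>), - snd (Gplus sm A B C \<xi>)))"
  by (simp add: fun_eq_iff Gplus_eq Gminus_eq split_paired_all)

lemma Gminus_closed: "yclosed ip DS S (DH DA DS) (Gminus sm A B C)"
  unfolding Gminus_eq_uminus_Gplus
  using Gplus_closed linear_on_minus[OF S_lin]
  by (intro yclosed_uminus) (auto simp: DH_def Gplus_eq)

lemma Re_yip_Gplus:
  assumes p: "p \<in> DA" and q: "q \<in> DS"
  shows "Re (yip ip S (p, q) (Gplus sm A B C (p, q))) = Re (ip q (C p)) - Im (ip q (B q))"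
proof -
  have p_DS: "p \<in> DS" "S p \<in> DS"
    using p DA_eq by auto
  have "ip q (A p) = cnj (ip (S p) (S q))"
    using S_symmetric[OF q p_DS(2)] S_S_eq_A[OF p] ip_cnj[of "S p" "S q"] by simp
  then have "yip ip S (p, q) (Gplus sm A B C (p, q)) =
      cnj (ip (S p) (S q)) - ip (S p) (S q) + \<i> * ip q (B q) + ip q (C p)"
    using linear_on_minus[OF S_lin q]
    by (simp add: yip_def Gplus_eq ip_minus_right ip_add_right ip_sm_right)
  then show ?thesis
    by simp
qed

lemma yip_Gminus:
  assumes "q \<in> DS"
  shows "yip ip S (p, q) (Gminus sm A B C (p, q)) = - yip ip S (p, q) (Gplus sm A B C (p, q))"
  using linear_on_minus[OF S_lin assms]
  by (simp only: yip_def Gplus_eq Gminus_eq fst_conv snd_conv ip_minus_right) simp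

lemma Re_yip_Gplus_bound:
  assumes \<xi>: "\<xi> \<in> DH DA DS" and \<mu>: "\<mu> \<ge> 0"
    and B_bound: "\<And>q. q \<in> DS \<Longrightarrow> \<bar>Im (ip q (B q))\<bar> \<le> \<mu> * (nm q)\<^sup>2"
  shows "\<bar>Re (yip ip S \<xi> (Gplus sm A B C \<xi>))\<bar> \<le> (\<mu> + yopnorm ip DS S (Vop sm C)) * Re (yip ip S \<xi> \<xi>)"
proof -
  obtain p q where \<xi>_eq: "\<xi> = (p, q)" and p: "p \<in> DA" and q: "q \<in> DS"
    using \<xi> unfolding DH_def by auto
  define Y where "Y = ynorm ip S \<xi>"
  define V where "V = yopnorm ip DS S (Vop sm C)"
  have q_Y: "nm q \<le> Y"
    using nm_snd_le_ynorm[of \<xi> S] by (simp add: Y_def \<xi>_eq)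
  have Cp_Y: "nm (C p) \<le> V * Y"
    using Vop_bound[OF C_rel C_lin, of \<xi>] \<xi> DA_eq by (auto simp: Y_def V_def \<xi>_eq Yspace_def DH_def)
  have "\<bar>Re (ip q (C p))\<bar> \<le> Y * (V * Y)"
    using abs_Re_ip_le[of q "C p"] mult_mono[OF q_Y Cp_Y _ nm_nonneg] by (simp add: Y_def ynorm_def Re_yip_self)
  moreover have "\<bar>Im (ip q (B q))\<bar> \<le> \<mu> * Y\<^sup>2"
  proof -
    have "\<mu> * (nm q)\<^sup>2 \<le> \<mu> * Y\<^sup>2"
      using q_Y \<mu> by (intro mult_left_mono power_mono) simp_all
    then show ?thesis
      using B_bound[OF q] by linarith
  qed
  ultimately have "\<bar>Re (yip ip S \<xi> (Gplus sm A B C \<xi>))\<bar> \<le> (\<mu> + V) * Y\<^sup>2"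
    using Re_yip_Gplus[OF p q] by (simp add: \<xi>_eq power2_eq_square algebra_simps)
  then show ?thesis
    by (simp add: Y_def V_def ynorm_squared)
qed

lemma Gplus_Gminus_lower_bound:
  assumes \<xi>: "\<xi> \<in> DH DA DS" and \<mu>: "\<mu> \<ge> 0"
    and B_bound: "\<And>q. q \<in> DS \<Longrightarrow> \<bar>Im (ip q (B q))\<bar> \<le> \<mu> * (nm q)\<^sup>2"
  shows "Re (yip ip S \<xi> (Gplus sm A B C \<xi>)) \<ge> - (\<mu> + yopnorm ip DS S (Vop sm C)) * Re (yip ip S \<xi> \<xi>) \<and>
         Re (yip ip S \<xi> (Gminus sm A B C \<xi>)) \<ge> - (\<mu> + yopnorm ip DS S (Vop sm C)) * Re (yip ip S \<xi> \<xi>)"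
proof -
  have "Re (yip ip S \<xi> (Gminus sm A B C \<xi>)) = - Re (yip ip S \<xi> (Gplus sm A B C \<xi>))"
    using \<xi> yip_Gminus by (auto simp: DH_def)
  then show ?thesis
    using Re_yip_Gplus_bound[OF assms] by linarith
qed

end

theorem lemma6:
  fixes sm :: "complex \<Rightarrow> 'x::ab_group_add \<Rightarrow> 'x"
    and ip :: "'x \<Rightarrow> 'x \<Rightarrow> complex"
    and DA DS :: "'x set"
    and A S B C :: "'x \<Rightarrow> 'x"
    and \<epsilon> a b c d :: real
  assumes hilb: "complex_hilbert sm ip"
    and nontriv: "\<exists>x::'x. x \<noteq> 0"
    and A_lin: "linear_on sm DA A"
    and A_dense: "dense_h ip DA"
    and A_sa: "selfadjoint_h ip DA A"
    and eps_pos: "\<epsilon> > 0"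
    and A_coercive: "\<forall>\<xi>\<in>DA. Re (ip \<xi> (A \<xi>)) \<ge> \<epsilon> * Re (ip \<xi> \<xi>)"
    and S_sqrt: "pos_sqrt_of sm ip DS S DA A"
    and B_lin: "linear_on sm DS B"
    and a_range: "0 \<le> a" "a < 1"
    and B_rel: "\<forall>\<xi>\<in>DS. (hnorm ip (B \<xi>))\<^sup>2 \<le> a\<^sup>2 * (hnorm ip (S \<xi>))\<^sup>2 + b\<^sup>2 * (hnorm ip \<xi>)\<^sup>2"
    and B_sym_or_bdd: "symmetric_on ip DS B \<or> bounded_on ip DS B"
    and C_lin: "linear_on sm DS C"
    and C_rel: "\<forall>\<xi>\<in>DS. (hnorm ip (C \<xi>))\<^sup>2 \<le> c\<^sup>2 * (hnorm ip (S \<xi>))\<^sup>2 + d\<^sup>2 * (hnorm ip \<xi>)\<^sup>2"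
  shows "yclosed ip DS S (DH DA DS) (Gplus sm A B C) \<and>
         yclosed ip DS S (DH DA DS) (Gminus sm A B C) \<and>
         yquasi_accretive ip S (DH DA DS) (Gplus sm A B C) \<and>
         yquasi_accretive ip S (DH DA DS) (Gminus sm A B C) \<and>
         (symmetric_on ip DS B \<longrightarrow>
            (\<forall>\<xi>\<in>DH DA DS.
               Re (yip ip S \<xi> (Gplus sm A B C \<xi>)) \<ge> - (0 + yopnorm ip DS S (Vop sm C)) * Re (yip ip S \<xi> \<xi>) \<and>
               Re (yip ip S \<xi> (Gminus sm A B C \<xi>)) \<ge> - (0 + yopnorm ip DS S (Vop sm C)) * Re (yip ip S \<xi> \<xi>))) \<and>
         (bounded_on ip DS B \<longrightarrow>
            (\<forall>\<xi>\<in>DH DA DS.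
               Re (yip ip S \<xi> (Gplus sm A B C \<xi>)) \<ge> - (opnorm_on ip DS B + yopnorm ip DS S (Vop sm C)) * Re (yip ip S \<xi> \<xi>) \<and>
               Re (yip ip S \<xi> (Gminus sm A B C \<xi>)) \<ge> - (opnorm_on ip DS B + yopnorm ip DS S (Vop sm C)) * Re (yip ip S \<xi> \<xi>)))"
proof -
  interpret wave_generator sm ip DA DS A S \<epsilon> B C a b c d
    by (intro wave_generator.intro coercive_root.intro hilbert.intro coercive_root_axioms.intro
        wave_generator_axioms.intro)
      (fact hilb A_lin A_dense A_sa eps_pos A_coercive S_sqrt B_lin B_rel C_lin C_rel)+
  have symmetric: "symmetric_on ip DS B \<longrightarrow> (\<forall>\<xi>\<in>DH DA DS.
      Re (yip ip S \<xi> (Gplus sm A B C \<xi>)) \<ge> - (0 + yopnorm ip DS S (Vop sm C)) * Re (yip ip S \<xi> \<xi>) \<and>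
      Re (yip ip S \<xi> (Gminus sm A B C \<xi>)) \<ge> - (0 + yopnorm ip DS S (Vop sm C)) * Re (yip ip S \<xi> \<xi>))"
    using Gplus_Gminus_lower_bound[of _ 0] symmetric_on_Im_ip_eq_0 by simp
  have bounded: "bounded_on ip DS B \<longrightarrow> (\<forall>\<xi>\<in>DH DA DS.
      Re (yip ip S \<xi> (Gplus sm A B C \<xi>)) \<ge>
        - (opnorm_on ip DS B + yopnorm ip DS S (Vop sm C)) * Re (yip ip S \<xi> \<xi>) \<and>
      Re (yip ip S \<xi> (Gminus sm A B C \<xi>)) \<ge>
        - (opnorm_on ip DS B + yopnorm ip DS S (Vop sm C)) * Re (yip ip S \<xi> \<xi>))"
    using Gplus_Gminus_lower_bound opnorm_on_nonneg[OF B_lin] bounded_on_abs_Im_ip_le[OF B_lin]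
    by blast
  have "yquasi_accretive ip S (DH DA DS) (Gplus sm A B C) \<and>
      yquasi_accretive ip S (DH DA DS) (Gminus sm A B C)"
    using B_sym_or_bdd symmetric bounded unfolding yquasi_accretive_def by blast
  then show ?thesis
    using Gplus_closed Gminus_closed symmetric bounded by blast
qed

end
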